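(* Let $n\ge 2$. For every $T\in\mathrm{C}$ we have $\hat{\tilde T}T\in\mathrm{C}^{\overline{03}}$. Consequently, $$\mathrm{B}=\begin{cases}\{T\in\mathrm{C}^\times:\ \hat{\tilde T} T\in(\mathrm{C}^0)^\times\}, & n\equiv 0,1,2 \pmod 4,\\ \{T\in\mathrm{C}^\times:\ \hat{\tilde T} T\in(\mathrm{C}^0\oplus\mathrm{C}^n)^\times\}, & n\equiv 3\pmod 4.\end{cases}$$ In particular, $\mathrm{B}=\mathrm{C}^\times$ for $n\le 3$.
   Context: Let $\mathrm{C}$ be either the real Clifford algebra $C\ell_{p,q}$ with $p+q=n$, or the complex Clifford algebra $C\ell(\mathbb{C}^n)$. It has identity $e$ and generators $e_1,\dots,e_n$ satisfying $e_ae_b+e_be_a=2\eta_{ab}e$. In the real case $\eta=\mathrm{diag}(1,\dots,1,-1,\dots,-1)$ with $p$ entries $+1$ and $q$ entries $-1$. In the complex case $\eta=I_n$. $\mathrm{C}^k$ is the grade-$k$ subspace, spanned by the products $e_{a_1}\cdots e_{a_k}$ with $a_1<\dots<a_k$. The grade involution $U\mapsto\hat U$ is the linear automorphism acting on $\mathrm{C}^k$ as $(-1)^k$. The reversion $U\mapsto\tilde U$ is the linear anti-automorphism acting on $\mathrm{C}^k$ as $(-1)^{k(k-1)/2}$. $\hat{\tilde T}$ denotes the grade involution of $\tilde T$. For $m=0,1,2,3$ let $\mathrm{C}^{\overline m}=\bigoplus_{k\equiv m \pmod 4}\mathrm{C}^k$, and $\mathrm{C}^{\overline{kl}}=\mathrm{C}^{\overline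 k}\oplus\mathrm{C}^{\overline l}$. For $S\subseteq\mathrm{C}$, $S^\times$ is the set of elements of $S$ invertible in $\mathrm{C}$. $\mathrm{Z}$ is the center: $\mathrm{Z}=\mathrm{C}^0$ for $n$ even and $\mathrm{Z}=\mathrm{C}^0\oplus\mathrm{C}^n$ for $n$ odd. Define $\mathrm{B}:=\{T\in\mathrm{C}^\times:\ \hat{\tilde T} T\in\mathrm{Z}^\times\}$. *)

theory Defs
  imports Complex_Main
begin

text \<open>Concrete model of a Clifford algebra on n generators with diagonal metric eta.
  An element is a coefficient function on blades: sets A of generator indices
  (generators are indexed 0..n-1); the blade A stands for the ordered product
  e_{a_1} ... e_{a_k} with a_1 < ... < a_k.\<close>

type_synonym 'a clif = "nat set \<Rightarrow> 'a"

definition cl_carrier :: "nat \<Rightarrow> 'a::comm_ring_1 clif set" where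
  "cl_carrier n = {u. \<forall>A. \<not> A \<subseteq> {0..<n} \<longrightarrow> u A = 0}"

text \<open>Sign and metric factor in e_A e_B = blade_sign eta A B e_{A symmetric-difference B}.\<close>
definition blade_sign :: "(nat \<Rightarrow> 'a::comm_ring_1) \<Rightarrow> nat set \<Rightarrow> nat set \<Rightarrow> 'a" where
  "blade_sign eta A B =
     (-1) ^ card {(a, b). a \<in> A \<and> b \<in> B \<and> b < a} * (\<Prod>a\<in>A \<inter> B. eta a)"

definition cl_mult :: "nat \<Rightarrow> (nat \<Rightarrow> 'a::comm_ring_1) \<Rightarrow> 'a clif \<Rightarrow> 'a clif \<Rightarrow> 'a clif" where
  "cl_mult n eta u v = (\<lambda>C. \<Sum>A\<in>Pow {0..<n}. \<Sum>B\<in>Pow {0..<n}.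
      if (A - B) \<union> (B - A) = C then u A * v B * blade_sign eta A B else 0)"

definition cl_one :: "'a::comm_ring_1 clif" where
  "cl_one = (\<lambda>A. if A = {} then 1 else 0)"

definition cl_hat :: "'a::comm_ring_1 clif \<Rightarrow> 'a clif" where
  "cl_hat u = (\<lambda>A. (-1) ^ card A * u A)"

definition cl_rev :: "'a::comm_ring_1 clif \<Rightarrow> 'a clif" where
  "cl_rev u = (\<lambda>A. (-1) ^ (card A * (card A - 1) div 2) * u A)"

definition cl_grades :: "nat \<Rightarrow> nat set \<Rightarrow> 'a::comm_ring_1 clif set" where
  "cl_grades n K = {u \<in> cl_carrier n. \<forall>A. card A \<notin> K \<longrightarrow> u A = 0}"

text \<open>C^{overline m}, the sum of grades congruent to m mod 4, for a set M of residues.\<close>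
definition cl_grades_mod4 :: "nat \<Rightarrow> nat set \<Rightarrow> 'a::comm_ring_1 clif set" where
  "cl_grades_mod4 n M = {u \<in> cl_carrier n. \<forall>A. card A mod 4 \<notin> M \<longrightarrow> u A = 0}"

definition cl_units :: "nat \<Rightarrow> (nat \<Rightarrow> 'a::comm_ring_1) \<Rightarrow> 'a clif set" where
  "cl_units n eta = {u \<in> cl_carrier n. \<exists>v\<in>cl_carrier n.
      cl_mult n eta u v = cl_one \<and> cl_mult n eta v u = cl_one}"

text \<open>Center as in the paper: C^0 for n even, C^0 + C^n for n odd.\<close>
definition cl_Z :: "nat \<Rightarrow> 'a::comm_ring_1 clif set" where
  "cl_Z n = (if even n then cl_grades n {0} else cl_grades n {0, n})"

definition cl_B :: "nat \<Rightarrow> (nat \<Rightarrow> 'a::comm_ring_1) \<Rightarrow> 'a clif set" where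
  "cl_B n eta = {T \<in> cl_units n eta.
      cl_mult n eta (cl_hat (cl_rev T)) T \<in> cl_Z n \<inter> cl_units n eta}"

definition eta_pq :: "nat \<Rightarrow> nat \<Rightarrow> real" where
  "eta_pq p i = (if i < p then 1 else -1)"

end

theory Submission
  imports Defs
begin

text \<open>Clifford conjugation \<open>T \<mapsto> \<hat>\<tilde>T\<close> multiplies the blade \<open>e\<^sub>A\<close> by
  \<open>(-1)\<^bsup>k(k+1)/2\<^esup>\<close>, \<open>k = |A|\<close>, and it is an involutive anti-automorphism; in the
  blade model the latter comes down to a parity count of inversions between two blades.
  Hence \<open>X = \<hat>\<tilde>T T\<close> is self-conjugate, so its components in the grades
  \<open>k \<equiv> 1, 2 (mod 4)\<close>, where the sign is \<open>-1\<close>, vanish. Of the remaining grades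
  only \<open>0\<close> is central, plus \<open>n\<close> when \<open>n \<equiv> 3 (mod 4)\<close>; for \<open>n \<le> 3\<close> every remaining
  grade is central, and since \<open>X\<close> is invertible whenever \<open>T\<close> is, \<open>B = C\<^sup>\<times>\<close> there.\<close>

lemma int_mult_pred_div_2: "int (k * (k - 1) div 2) * 2 = int k * (int k - 1)"
proof (cases k)
  case (Suc j)
  have "even (k * (k - 1))" by auto
  then have "int (k * (k - 1) div 2) * 2 = int (k * (k - 1))"
    by (metis dvd_div_mult_self of_nat_mult of_nat_numeral)
  also have "\<dots> = int k * (int k - 1)" using Suc by (simp add: algebra_simps)
  finally show ?thesis .
qed simp

text \<open>In the application \<open>a = |A|\<close>, \<open>b = |B|\<close>, \<open>c = |A \<inter> B|\<close>, \<open>m = |A \<triangle> B|\<close>, and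
  \<open>N1\<close>, \<open>N2\<close> count the inversions between \<open>A\<close> and \<open>B\<close> in either order.\<close>

lemma even_conj_sign_exponents:
  fixes N1 N2 c a b m :: nat
  assumes inversions: "N1 + N2 + c = a * b" and card_sym_diff: "m + 2 * c = a + b"
  shows "even (N1 + N2 + m + m * (m - 1) div 2 + a + a * (a - 1) div 2 + b + b * (b - 1) div 2)"
proof -
  let ?S = "N1 + N2 + m + m * (m - 1) div 2 + a + a * (a - 1) div 2 + b + b * (b - 1) div 2"
  obtain ka where ka: "int a * (int a + 1) = 2 * ka"
    by (metis dvd_def even_mult_iff even_add odd_one)
  obtain kb where kb: "int b * (int b + 1) = 2 * kb"
    by (metis dvd_def even_mult_iff even_add odd_one)
  have N: "int N1 + int N2 + int c = int a * int b" using inversions by (metis of_nat_add of_nat_mult)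
  have m: "int m = int a + int b - 2 * int c" using card_sym_diff by linarith
  have "int ?S * 2 = (int N1 + int N2) * 2 + int m * 2 + int m * (int m - 1) + int a * 2
      + int a * (int a - 1) + int b * 2 + int b * (int b - 1)"
    using int_mult_pred_div_2[of m] int_mult_pred_div_2[of a] int_mult_pred_div_2[of b]
    by (simp add: algebra_simps)
  also have "\<dots> = 4 * (int a * int b - int c - int c * (int a + int b) + int c * int c + ka + kb)"
    unfolding m using N ka kb by (simp add: algebra_simps)
  finally have "int ?S = 2 * (int a * int b - int c - int c * (int a + int b) + int c * int c + ka + kb)"
    by simp
  then show ?thesis by presburger
qed

lemma card_inversions_add_card_Int:
  fixes A B :: "'a::linorder set"
  assumes "finite A" and "finite B"
  shows "card {(a, b). a \<in> A \<and> b \<in> B \<and> b < a} + card {(a, b). a \<in> B \<and> b \<in> A \<and> b < a}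
    + card (A \<inter> B) = card A * card B"
proof -
  let ?S1 = "{(a, b). a \<in> A \<and> b \<in> B \<and> b < a}"
  let ?S2 = "{(a, b). a \<in> B \<and> b \<in> A \<and> b < a}"
  let ?S2' = "{(a, b). a \<in> A \<and> b \<in> B \<and> a < b}"
  let ?D = "{(a, b). a \<in> A \<and> b \<in> B \<and> a = b}"
  have fin: "finite ?S1" "finite ?S2'" "finite ?D"
    by (auto intro: finite_subset[of _ "A \<times> B"] simp: assms)
  have "A \<times> B = (?S1 \<union> ?S2') \<union> ?D" by auto
  then have "card A * card B = card ((?S1 \<union> ?S2') \<union> ?D)"
    by (metis card_cartesian_product)
  also have "\<dots> = card (?S1 \<union> ?S2') + card ?D"
    using fin by (intro card_Un_disjoint) auto
  also have "card (?S1 \<union> ?S2') = card ?S1 + card ?S2'"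
    using fin by (intro card_Un_disjoint) auto
  finally have "card A * card B = card ?S1 + card ?S2' + card ?D" .
  moreover have "card ?S2' = card ?S2"
    by (rule bij_betw_same_card[of prod.swap]) (auto simp: bij_betw_def inj_on_def image_def)
  moreover have "card ?D = card (A \<inter> B)"
    by (rule bij_betw_same_card[of fst]) (auto simp: bij_betw_def inj_on_def image_def)
  ultimately show ?thesis by linarith
qed

lemma card_sym_diff_add_card_Int:
  assumes "finite A" and "finite B"
  shows "card (sym_diff A B) + 2 * card (A \<inter> B) = card A + card B"
proof -
  have "A \<union> B = sym_diff A B \<union> (A \<inter> B)" by blast
  then have "card (A \<union> B) = card (sym_diff A B) + card (A \<inter> B)"
    using assms by (simp add: card_Un_disjoint disjoint_iff)
  then show ?thesis using card_Un_Int[OF assms] by simp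
qed

definition conj_sign :: "nat \<Rightarrow> 'a::comm_ring_1" where
  "conj_sign k = (-1) ^ k * (-1) ^ (k * (k - 1) div 2)"

lemma conj_sign_mult_self: "(conj_sign k :: 'a::comm_ring_1) * conj_sign k = 1"
  by (simp add: conj_sign_def minus_one_power_iff)

lemma conj_sign_eq_minus_one:
  assumes "k mod 4 \<notin> {0, 3}"
  shows "(conj_sign k :: 'a::comm_ring_1) = -1"
proof -
  define q r where "q = k div 4" and "r = k mod 4"
  then have k: "k = 4 * q + r" and r: "r = 1 \<or> r = 2" using assms by auto
  from r have "odd (k + k * (k - 1) div 2)"
  proof
    assume "r = 1"
    then have "k * (k - 1) div 2 = k * (2 * q)" and "odd k" using k by simp_all
    then show ?thesis by simp
  next
    assume "r = 2"
    then have "k * (k - 1) div 2 = (2 * q + 1) * (4 * q + 1)" and "even k" using k by simp_all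
    then show ?thesis by simp
  qed
  then show ?thesis unfolding conj_sign_def power_add[symmetric] minus_one_power_iff by simp
qed

lemma blade_sign_empty: "blade_sign eta {} B = 1" "blade_sign eta A {} = 1"
  by (simp_all add: blade_sign_def)

lemma blade_sign_eq_prod:
  fixes eta :: "nat \<Rightarrow> 'a::comm_ring_1"
  assumes "finite U" and "X \<subseteq> U" and "Y \<subseteq> U"
  shows "blade_sign eta X Y =
    (\<Prod>p\<in>U \<times> U. if fst p \<in> X \<and> snd p \<in> Y \<and> snd p < fst p then -1 else 1) *
    (\<Prod>i\<in>U. if i \<in> X \<and> i \<in> Y then eta i else 1)"
proof -
  have "(U \<times> U) \<inter> {p. fst p \<in> X \<and> snd p \<in> Y \<and> snd p < fst p} = {(a, b). a \<in> X \<and> b \<in> Y \<and> b < a}"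
    using assms by auto
  then have "(\<Prod>p\<in>U \<times> U. if fst p \<in> X \<and> snd p \<in> Y \<and> snd p < fst p then -1 else 1::'a) =
      (-1) ^ card {(a, b). a \<in> X \<and> b \<in> Y \<and> b < a}"
    using assms by (subst prod.If_cases) auto
  moreover have "(\<Prod>i\<in>U. if i \<in> X \<and> i \<in> Y then eta i else 1) = prod eta (X \<inter> Y)"
    using prod.inter_restrict[OF \<open>finite U\<close>, of eta "X \<inter> Y"] assms
    by (simp add: Int_absorb1 le_infI1)
  ultimately show ?thesis unfolding blade_sign_def by (simp only:)
qed

lemma blade_sign_cocycle:
  assumes U: "finite U" and X: "X \<subseteq> U" and Y: "Y \<subseteq> U" and Z: "Z \<subseteq> U"
  shows "blade_sign eta X Y * blade_sign eta (sym_diff X Y) Z =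
         blade_sign eta Y Z * blade_sign eta X (sym_diff Y Z)"
proof -
  have XY: "sym_diff X Y \<subseteq> U" and YZ: "sym_diff Y Z \<subseteq> U" using X Y Z by auto
  let ?P = "\<lambda>X Y. \<Prod>p\<in>U \<times> U. if fst p \<in> X \<and> snd p \<in> Y \<and> snd p < fst p then -1 else (1::'a)"
  let ?E = "\<lambda>X Y. \<Prod>i\<in>U. if i \<in> X \<and> i \<in> Y then eta i else 1"
  have P: "?P X Y * ?P (sym_diff X Y) Z = ?P Y Z * ?P X (sym_diff Y Z)"
    unfolding prod.distrib[symmetric] by (rule prod.cong) auto
  have E: "?E X Y * ?E (sym_diff X Y) Z = ?E Y Z * ?E X (sym_diff Y Z)"
    unfolding prod.distrib[symmetric] by (rule prod.cong) auto
  have "?P X Y * ?E X Y * (?P (sym_diff X Y) Z * ?E (sym_diff X Y) Z)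
      = (?P X Y * ?P (sym_diff X Y) Z) * (?E X Y * ?E (sym_diff X Y) Z)"
    by (simp add: ac_simps)
  also have "\<dots> = ?P Y Z * ?E Y Z * (?P X (sym_diff Y Z) * ?E X (sym_diff Y Z))"
    unfolding P E by (simp add: ac_simps)
  finally show ?thesis
    unfolding blade_sign_eq_prod[OF U X Y] blade_sign_eq_prod[OF U XY Z]
      blade_sign_eq_prod[OF U Y Z] blade_sign_eq_prod[OF U X YZ] .
qed

lemma blade_sign_conj:
  assumes "finite A" and "finite B"
  shows "conj_sign (card (sym_diff A B)) * blade_sign eta A B
    = conj_sign (card A) * conj_sign (card B) * blade_sign eta B A"
proof -
  let ?N1 = "card {(a, b). a \<in> A \<and> b \<in> B \<and> b < a}"
  let ?N2 = "card {(a, b). a \<in> B \<and> b \<in> A \<and> b < a}"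
  let ?m = "card (sym_diff A B)"
  have "even (?N1 + ?N2 + ?m + ?m * (?m - 1) div 2 + card A + card A * (card A - 1) div 2
      + card B + card B * (card B - 1) div 2)"
    by (rule even_conj_sign_exponents[OF card_inversions_add_card_Int[OF assms]
          card_sym_diff_add_card_Int[OF assms]])
  then have "(-1::'a) ^ (?N1 + ?m + ?m * (?m - 1) div 2)
      = (-1) ^ (card A + card A * (card A - 1) div 2 + card B + card B * (card B - 1) div 2 + ?N2)"
    unfolding minus_one_power_iff by auto
  then have "(-1::'a) ^ ?N1 * conj_sign ?m = conj_sign (card A) * conj_sign (card B) * (-1) ^ ?N2"
    by (simp add: conj_sign_def power_add ac_simps)
  then show ?thesis unfolding blade_sign_def by (simp add: Int_commute ac_simps)
qed

lemma cl_mult_outside: "\<not> C \<subseteq> {0..<n} \<Longrightarrow> cl_mult n eta u v C = 0"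
  unfolding cl_mult_def by (intro sum.neutral ballI) auto

lemma cl_mult_in_carrier: "cl_mult n eta u v \<in> cl_carrier n"
  by (simp add: cl_carrier_def cl_mult_outside)

lemma cl_mult_eq_sum:
  assumes "C \<subseteq> {0..<n}"
  shows "cl_mult n eta u v C =
    (\<Sum>A\<in>Pow {0..<n}. u A * v (sym_diff A C) * blade_sign eta A (sym_diff A C))"
proof -
  have "\<And>A B. (sym_diff A B = C) = (B = sym_diff A C)" by blast
  then show ?thesis unfolding cl_mult_def
    by (intro sum.cong refl) (use assms in auto)
qed

lemma cl_mult_mult_left_eq_sum:
  assumes "D \<subseteq> {0..<n}"
  shows "cl_mult n eta (cl_mult n eta u v) w D =
    (\<Sum>A\<in>Pow {0..<n}. \<Sum>E\<in>Pow {0..<n}. u A * v (sym_diff A E) * w (sym_diff E D) *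
      (blade_sign eta A (sym_diff A E) * blade_sign eta E (sym_diff E D)))"
proof -
  have "cl_mult n eta (cl_mult n eta u v) w D =
    (\<Sum>E\<in>Pow {0..<n}. \<Sum>A\<in>Pow {0..<n}. u A * v (sym_diff A E) * w (sym_diff E D) *
      (blade_sign eta A (sym_diff A E) * blade_sign eta E (sym_diff E D)))"
    unfolding cl_mult_eq_sum[OF assms]
  proof (intro sum.cong refl)
    fix E assume "E \<in> Pow {0..<n}"
    then have E: "E \<subseteq> {0..<n}" by simp
    show "cl_mult n eta u v E * w (sym_diff E D) * blade_sign eta E (sym_diff E D) =
      (\<Sum>A\<in>Pow {0..<n}. u A * v (sym_diff A E) * w (sym_diff E D) *
        (blade_sign eta A (sym_diff A E) * blade_sign eta E (sym_diff E D)))"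
      unfolding cl_mult_eq_sum[OF E] sum_distrib_right by (intro sum.cong refl) (simp add: ac_simps)
  qed
  also have "\<dots> = (\<Sum>A\<in>Pow {0..<n}. \<Sum>E\<in>Pow {0..<n}. u A * v (sym_diff A E) * w (sym_diff E D) *
      (blade_sign eta A (sym_diff A E) * blade_sign eta E (sym_diff E D)))"
    by (rule sum.swap)
  finally show ?thesis .
qed

lemma cl_mult_mult_right_eq_sum:
  assumes "D \<subseteq> {0..<n}"
  shows "cl_mult n eta u (cl_mult n eta v w) D =
    (\<Sum>A\<in>Pow {0..<n}. \<Sum>E\<in>Pow {0..<n}. u A * v (sym_diff A E) * w (sym_diff E D) *
      (blade_sign eta (sym_diff A E) (sym_diff E D) * blade_sign eta A (sym_diff A D)))"
proof -
  have "u A * cl_mult n eta v w (sym_diff A D) * blade_sign eta A (sym_diff A D) =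
    (\<Sum>E\<in>Pow {0..<n}. u A * v (sym_diff A E) * w (sym_diff E D) *
      (blade_sign eta (sym_diff A E) (sym_diff E D) * blade_sign eta A (sym_diff A D)))"
    if A: "A \<subseteq> {0..<n}" for A
  proof -
    have AD: "sym_diff A D \<subseteq> {0..<n}" using A assms by auto
    have "u A * cl_mult n eta v w (sym_diff A D) * blade_sign eta A (sym_diff A D) =
      (\<Sum>B\<in>Pow {0..<n}. u A * v B * w (sym_diff B (sym_diff A D)) *
        (blade_sign eta B (sym_diff B (sym_diff A D)) * blade_sign eta A (sym_diff A D)))"
      unfolding cl_mult_eq_sum[OF AD] sum_distrib_left sum_distrib_right
      by (intro sum.cong refl) (simp add: ac_simps)
    also have "\<dots> = (\<Sum>E\<in>Pow {0..<n}. u A * v (sym_diff A E) * w (sym_diff E D) *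
        (blade_sign eta (sym_diff A E) (sym_diff E D) * blade_sign eta A (sym_diff A D)))"
    proof -
      have eq: "sym_diff A (sym_diff A B) = B" "sym_diff (sym_diff A B) D = sym_diff B (sym_diff A D)"
        for B by blast+
      show ?thesis
        by (rule sum.reindex_bij_witness[where i = "sym_diff A" and j = "sym_diff A"])
          (use A in \<open>auto simp only: eq\<close>)
    qed
    finally show ?thesis .
  qed
  then show ?thesis unfolding cl_mult_eq_sum[OF assms] by (intro sum.cong refl) simp
qed

lemma cl_mult_assoc:
  "cl_mult n eta (cl_mult n eta u v) w = cl_mult n eta u (cl_mult n eta v w)"
proof
  fix D
  show "cl_mult n eta (cl_mult n eta u v) w D = cl_mult n eta u (cl_mult n eta v w) D"
  proof (cases "D \<subseteq> {0..<n}")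
    case True
    have "blade_sign eta A (sym_diff A E) * blade_sign eta E (sym_diff E D) =
        blade_sign eta (sym_diff A E) (sym_diff E D) * blade_sign eta A (sym_diff A D)"
      if "A \<subseteq> {0..<n}" "E \<subseteq> {0..<n}" for A E
    proof -
      have "sym_diff A E \<subseteq> {0..<n}" "sym_diff E D \<subseteq> {0..<n}" using that True by auto
      note blade_sign_cocycle[OF finite_atLeastLessThan that(1) this, of eta]
      moreover have "sym_diff A (sym_diff A E) = E" "sym_diff (sym_diff A E) (sym_diff E D) = sym_diff A D"
        by blast+
      ultimately show ?thesis by simp
    qed
    then show ?thesis
      unfolding cl_mult_mult_left_eq_sum[OF True] cl_mult_mult_right_eq_sum[OF True]
      by (intro sum.cong refl) auto
  qed (simp add: cl_mult_outside)
qed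

lemma cl_mult_one_left: "u \<in> cl_carrier n \<Longrightarrow> cl_mult n eta cl_one u = u"
proof
  fix C assume u: "u \<in> cl_carrier n"
  show "cl_mult n eta cl_one u C = u C"
  proof (cases "C \<subseteq> {0..<n}")
    case True
    then show ?thesis unfolding cl_mult_eq_sum[OF True] cl_one_def
      by (simp add: blade_sign_empty if_distrib[of "\<lambda>x. x * _"] cong: if_cong)
  qed (use u in \<open>simp add: cl_mult_outside cl_carrier_def\<close>)
qed

lemma cl_mult_one_right: "u \<in> cl_carrier n \<Longrightarrow> cl_mult n eta u cl_one = u"
proof
  fix C assume u: "u \<in> cl_carrier n"
  show "cl_mult n eta u cl_one C = u C"
  proof (cases "C \<subseteq> {0..<n}")
    case True
    have "sym_diff A C = {} \<longleftrightarrow> A = C" for A :: "nat set" by blast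
    then have "(\<Sum>A\<in>Pow {0..<n}. u A * cl_one (sym_diff A C) * blade_sign eta A (sym_diff A C))
       = (\<Sum>A\<in>Pow {0..<n}. if A = C then u A else 0)"
      by (intro sum.cong refl) (auto simp: cl_one_def blade_sign_empty)
    then show ?thesis unfolding cl_mult_eq_sum[OF True] using True by simp
  qed (use u in \<open>simp add: cl_mult_outside cl_carrier_def\<close>)
qed

definition cl_conj :: "'a::comm_ring_1 clif \<Rightarrow> 'a clif" where
  "cl_conj u = cl_hat (cl_rev u)"

lemma cl_conj_apply: "cl_conj u A = conj_sign (card A) * u A"
  by (simp add: cl_conj_def cl_hat_def cl_rev_def conj_sign_def)

lemma cl_conj_in_carrier: "u \<in> cl_carrier n \<Longrightarrow> cl_conj u \<in> cl_carrier n"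
  by (simp add: cl_carrier_def cl_conj_apply)

lemma cl_conj_conj: "cl_conj (cl_conj u) = u"
  by (rule ext) (simp add: cl_conj_apply mult.assoc[symmetric] conj_sign_mult_self)

lemma cl_conj_one: "cl_conj cl_one = cl_one"
  by (rule ext) (simp add: cl_conj_apply cl_one_def conj_sign_def)

lemma cl_conj_mult: "cl_conj (cl_mult n eta u v) = cl_mult n eta (cl_conj v) (cl_conj u)"
proof
  fix C
  have "conj_sign (card C) * (if sym_diff A B = C then u A * v B * blade_sign eta A B else 0) =
      (if sym_diff B A = C then conj_sign (card B) * v B * (conj_sign (card A) * u A) * blade_sign eta B A
       else 0)"
    if "A \<in> Pow {0..<n}" "B \<in> Pow {0..<n}" for A B
  proof -
    have "finite A" "finite B" using that finite_subset by auto
    moreover have "sym_diff B A = sym_diff A B" by blast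
    ultimately show ?thesis using blade_sign_conj[of A B eta] by (auto simp: ac_simps)
  qed
  then show "cl_conj (cl_mult n eta u v) C = cl_mult n eta (cl_conj v) (cl_conj u) C"
    unfolding cl_conj_apply cl_mult_def sum_distrib_left
    by (subst sum.swap) (intro sum.cong refl; simp)
qed

lemma cl_conj_mult_self_in_units:
  assumes "T \<in> cl_units n eta"
  shows "cl_mult n eta (cl_conj T) T \<in> cl_units n eta"
proof -
  let ?m = "cl_mult n eta"
  obtain V where V: "V \<in> cl_carrier n" and TV: "?m T V = cl_one" and VT: "?m V T = cl_one"
    using assms unfolding cl_units_def by blast
  have T: "T \<in> cl_carrier n" using assms unfolding cl_units_def by blast
  have cVcT: "?m (cl_conj V) (cl_conj T) = cl_one" and cTcV: "?m (cl_conj T) (cl_conj V) = cl_one"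
    using arg_cong[OF TV, of cl_conj] arg_cong[OF VT, of cl_conj] by (simp_all add: cl_conj_mult cl_conj_one)
  have "?m (?m (cl_conj T) T) (?m V (cl_conj V)) = ?m (cl_conj T) (?m (?m T V) (cl_conj V))"
    by (simp only: cl_mult_assoc)
  also have "\<dots> = cl_one" by (simp add: TV cl_mult_one_left cl_conj_in_carrier V cTcV)
  finally have right_inverse: "?m (?m (cl_conj T) T) (?m V (cl_conj V)) = cl_one" .
  have "?m (?m V (cl_conj V)) (?m (cl_conj T) T) = ?m V (?m (?m (cl_conj V) (cl_conj T)) T)"
    by (simp only: cl_mult_assoc)
  also have "\<dots> = cl_one" by (simp add: cVcT cl_mult_one_left T VT)
  finally show ?thesis unfolding cl_units_def using right_inverse cl_mult_in_carrier by blast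
qed

lemma cl_conj_mult_self_in_grades_mod4:
  fixes T :: "'a::field_char_0 clif"
  shows "cl_mult n eta (cl_conj T) T \<in> cl_grades_mod4 n {0, 3}"
proof -
  let ?X = "cl_mult n eta (cl_conj T) T"
  have "?X A = 0" if A: "card A mod 4 \<notin> {0, 3}" for A
  proof -
    have "cl_conj ?X = ?X" by (simp add: cl_conj_mult cl_conj_conj)
    then have "?X A = conj_sign (card A) * ?X A" by (metis cl_conj_apply)
    then show ?thesis by (simp add: conj_sign_eq_minus_one[OF A])
  qed
  then show ?thesis unfolding cl_grades_mod4_def using cl_mult_in_carrier by blast
qed

lemma cl_Z_inter_grades_mod4:
  assumes "n mod 4 \<noteq> 3" and "X \<in> cl_grades_mod4 n {0, 3}"
  shows "X \<in> cl_Z n \<longleftrightarrow> X \<in> cl_grades n {0}"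
proof (cases "even n")
  case False
  with assms(1) have "n mod 4 = 1" by presburger
  with False assms(2) show ?thesis unfolding cl_Z_def cl_grades_def cl_grades_mod4_def by auto
qed (simp add: cl_Z_def)

lemma cl_grades_mod4_subset_cl_Z:
  assumes "n \<le> 3"
  shows "cl_grades_mod4 n {0, 3} \<subseteq> cl_Z n"
proof
  fix X :: "'a clif" assume X: "X \<in> cl_grades_mod4 n {0, 3}"
  have "X A = 0" if "card A \<notin> (if even n then {0} else {0, n})" for A
  proof (cases "A \<subseteq> {0..<n}")
    case True
    then have "card A \<le> n" using card_mono[of "{0..<n}" A] by simp
    then have "card A mod 4 \<notin> {0, 3}" using that assms by (auto split: if_splits)
    then show ?thesis using X unfolding cl_grades_mod4_def by blast
  qed (use X in \<open>auto simp: cl_grades_mod4_def cl_carrier_def\<close>)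
  then show "X \<in> cl_Z n" using X unfolding cl_Z_def cl_grades_def cl_grades_mod4_def
    by (cases "even n") auto
qed

lemma cl_B_eq_grade_0:
  fixes eta :: "nat \<Rightarrow> 'a::field_char_0"
  assumes "n mod 4 \<noteq> 3"
  shows "cl_B n eta = {T \<in> cl_units n eta.
    cl_mult n eta (cl_conj T) T \<in> cl_grades n {0} \<inter> cl_units n eta}"
  unfolding cl_B_def cl_conj_def[symmetric]
  using cl_Z_inter_grades_mod4[OF assms cl_conj_mult_self_in_grades_mod4] by blast

lemma cl_B_eq_grades_0_n:
  assumes "n mod 4 = 3"
  shows "cl_B n eta = {T \<in> cl_units n eta.
    cl_mult n eta (cl_conj T) T \<in> cl_grades n {0, n} \<inter> cl_units n eta}"
proof -
  from assms have "odd n" by presburger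
  then show ?thesis unfolding cl_B_def cl_Z_def cl_conj_def by simp
qed

lemma cl_B_eq_units:
  fixes eta :: "nat \<Rightarrow> 'a::field_char_0"
  assumes "n \<le> 3"
  shows "cl_B n eta = cl_units n eta"
  unfolding cl_B_def cl_conj_def[symmetric]
  using cl_grades_mod4_subset_cl_Z[OF assms] cl_conj_mult_self_in_grades_mod4
    cl_conj_mult_self_in_units by blast

lemma cl_B_characterisation:
  fixes eta :: "nat \<Rightarrow> 'a::field_char_0"
  shows "(\<forall>T \<in> cl_carrier n. cl_mult n eta (cl_conj T) T \<in> cl_grades_mod4 n {0, 3}) \<and>
    (n mod 4 \<in> {0, 1, 2} \<longrightarrow> cl_B n eta = {T \<in> cl_units n eta.
        cl_mult n eta (cl_conj T) T \<in> cl_grades n {0} \<inter> cl_units n eta}) \<and>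
    (n mod 4 = 3 \<longrightarrow> cl_B n eta = {T \<in> cl_units n eta.
        cl_mult n eta (cl_conj T) T \<in> cl_grades n {0, n} \<inter> cl_units n eta}) \<and>
    (n \<le> 3 \<longrightarrow> cl_B n eta = cl_units n eta)"
  using cl_conj_mult_self_in_grades_mod4 cl_B_eq_grade_0[of n eta] cl_B_eq_grades_0_n[of n eta]
    cl_B_eq_units[of n eta] by auto

theorem mainTheorem7:
  shows
  "(\<forall>p q. p + q \<ge> 2 \<longrightarrow>
     (let n = p + q; eta = eta_pq p :: nat \<Rightarrow> real in
       (\<forall>T \<in> cl_carrier n. cl_mult n eta (cl_hat (cl_rev T)) T \<in> cl_grades_mod4 n {0, 3}) \<and>
       (n mod 4 \<in> {0, 1, 2} \<longrightarrow> cl_B n eta = {T \<in> cl_units n eta.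
           cl_mult n eta (cl_hat (cl_rev T)) T \<in> cl_grades n {0} \<inter> cl_units n eta}) \<and>
       (n mod 4 = 3 \<longrightarrow> cl_B n eta = {T \<in> cl_units n eta.
           cl_mult n eta (cl_hat (cl_rev T)) T \<in> cl_grades n {0, n} \<inter> cl_units n eta}) \<and>
       (n \<le> 3 \<longrightarrow> cl_B n eta = cl_units n eta)))
   \<and>
   (\<forall>n. n \<ge> 2 \<longrightarrow>
     (let eta = (\<lambda>_. 1) :: nat \<Rightarrow> complex in
       (\<forall>T \<in> cl_carrier n. cl_mult n eta (cl_hat (cl_rev T)) T \<in> cl_grades_mod4 n {0, 3}) \<and>
       (n mod 4 \<in> {0, 1, 2} \<longrightarrow> cl_B n eta = {T \<in> cl_units n eta.
           cl_mult n eta (cl_hat (cl_rev T)) T \<in> cl_grades n {0} \<inter> cl_units n eta}) \<and>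
       (n mod 4 = 3 \<longrightarrow> cl_B n eta = {T \<in> cl_units n eta.
           cl_mult n eta (cl_hat (cl_rev T)) T \<in> cl_grades n {0, n} \<inter> cl_units n eta}) \<and>
       (n \<le> 3 \<longrightarrow> cl_B n eta = cl_units n eta)))"
  using cl_B_characterisation[where 'a = real] cl_B_characterisation[where 'a = complex]
  unfolding cl_conj_def by (simp add: Let_def)

end
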